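(* Let $(\Omega,\mu)$ be a finite probability space, $0<\rho\le1/3$, $q\ge2$, and $f\colon\Omega^n\to\mathbb{R}$. Then \[\|T_{\rho/\sqrt q}f\|_q^q\le\sum_{S\subseteq[n]}\beta^{q|S|}q^{-q|S|/2}\,\mathbb{E}_{x\sim\mu^S}\|D_{S,x}f\|_2^q,\] where $\beta=\rho\left(1+\frac{2(q-2)}{\log(1/\rho)}\right)$.
   Context: Norms w.r.t. $\mu^n$ (over remaining coordinates for $D_{S,x}f$); $\log$ natural. $T_\rho f(x)=\mathbb{E}_y f(y)$ where $y$ keeps each $x_i$ independently with probability $\rho$ and otherwise resamples it from $\mu$. For $i\in[n]$, $E_i$ averages over coordinate $i$ according to $\mu$, $L_i=I-E_i$, $L_S=\prod_{i\in S}L_i$, and $D_{S,x}f=(L_Sf)_{S\to x}$, where $h_{S\to x}(y)=h(x,y)$. *)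

theory Defs
  imports "HOL-Analysis.Analysis"
begin

text \<open>Finite probability space: a finite nonempty set Om with weights mu.
 Points of Om^S are extensional functions in PiE S (\<lambda>_. Om).
 Coordinates are indexed by {0..<n}.\<close>

definition fin_prob_space :: "'a set \<Rightarrow> ('a \<Rightarrow> real) \<Rightarrow> bool" where
  "fin_prob_space Om mu \<longleftrightarrow> finite Om \<and> Om \<noteq> {} \<and> (\<forall>a\<in>Om. 0 \<le> mu a) \<and> sum mu Om = 1"

definition expS :: "'a set \<Rightarrow> ('a \<Rightarrow> real) \<Rightarrow> nat set \<Rightarrow> ((nat \<Rightarrow> 'a) \<Rightarrow> real) \<Rightarrow> real" where
  "expS Om mu S g = (\<Sum>x\<in>PiE S (\<lambda>_. Om). (\<Prod>i\<in>S. mu (x i)) * g x)"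

definition normq_pow :: "'a set \<Rightarrow> ('a \<Rightarrow> real) \<Rightarrow> nat set \<Rightarrow> real \<Rightarrow> ((nat \<Rightarrow> 'a) \<Rightarrow> real) \<Rightarrow> real" where
  "normq_pow Om mu S q g = expS Om mu S (\<lambda>x. \<bar>g x\<bar> powr q)"

definition norm2 :: "'a set \<Rightarrow> ('a \<Rightarrow> real) \<Rightarrow> nat set \<Rightarrow> ((nat \<Rightarrow> 'a) \<Rightarrow> real) \<Rightarrow> real" where
  "norm2 Om mu S g = sqrt (expS Om mu S (\<lambda>x. (g x)\<^sup>2))"

text \<open>Noise operator on Om^n: y keeps x_i w.p. rho, else resamples from mu.\<close>
definition noiseT :: "'a set \<Rightarrow> ('a \<Rightarrow> real) \<Rightarrow> nat \<Rightarrow> real \<Rightarrow> ((nat \<Rightarrow> 'a) \<Rightarrow> real) \<Rightarrow> (nat \<Rightarrow> 'a) \<Rightarrow> real" where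
  "noiseT Om mu n rho f x =
     (\<Sum>y\<in>PiE {0..<n} (\<lambda>_. Om).
        (\<Prod>i\<in>{0..<n}. rho * (if y i = x i then 1 else 0) + (1 - rho) * mu (y i)) * f y)"

definition avgE :: "'a set \<Rightarrow> ('a \<Rightarrow> real) \<Rightarrow> nat \<Rightarrow> ((nat \<Rightarrow> 'a) \<Rightarrow> real) \<Rightarrow> (nat \<Rightarrow> 'a) \<Rightarrow> real" where
  "avgE Om mu i f x = (\<Sum>a\<in>Om. mu a * f (x(i := a)))"

definition opL :: "'a set \<Rightarrow> ('a \<Rightarrow> real) \<Rightarrow> nat \<Rightarrow> ((nat \<Rightarrow> 'a) \<Rightarrow> real) \<Rightarrow> (nat \<Rightarrow> 'a) \<Rightarrow> real" where
  "opL Om mu i f x = f x - avgE Om mu i f x"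

text \<open>L_S = product of L_i over i in S (the L_i commute; we compose in increasing order).\<close>
definition opLS :: "'a set \<Rightarrow> ('a \<Rightarrow> real) \<Rightarrow> nat set \<Rightarrow> ((nat \<Rightarrow> 'a) \<Rightarrow> real) \<Rightarrow> (nat \<Rightarrow> 'a) \<Rightarrow> real" where
  "opLS Om mu S f = foldr (opL Om mu) (sorted_list_of_set S) f"

definition derivD :: "'a set \<Rightarrow> ('a \<Rightarrow> real) \<Rightarrow> nat set \<Rightarrow> (nat \<Rightarrow> 'a) \<Rightarrow> ((nat \<Rightarrow> 'a) \<Rightarrow> real) \<Rightarrow> (nat \<Rightarrow> 'a) \<Rightarrow> real" where
  "derivD Om mu S x f y = opLS Om mu S f (\<lambda>i. if i \<in> S then x i else y i)"

end

theory Submission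
  imports Defs
begin

(* Fixing the value c of a new coordinate j, the noise operator
   on I + j becomes the noise operator on I applied to r f(., c) + (1 - r) E_j f, with r = rho/sqrt q.
   After the induction hypothesis, what remains is an inequality for a family U_c of vectors in
   L^2 with mean A = E_c U_c:
     E_c |r U_c + (1 - r) A|^q <= (E_c |U_c|^2)^(q/2) + (beta/sqrt q)^q E_c |U_c - A|^q,
   applied to U_c = D_{S,x} f with coordinate j set to c, so that U_c - A = D_{S+j,(x,c)} f.
   Writing |r U_c + (1 - r) A|^2 = |A|^2 (1 + 2u + s^2) with |u| <= s, this follows from the
   scalar inequality |1 + u|^q <= 1 + q u + q^2/(2 rho^2) u^2 + (beta/rho)^q |u|^q and convexity
   of t^(q/2): the linear term has mean zero, and the quadratic one is absorbed by the tangent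
   line of t^(q/2) at |A|^2. *)

section \<open>Scalar inequalities\<close>

lemma exp_minus_one_le: "0 \<le> (x::real) \<Longrightarrow> exp x - 1 \<le> x * exp x"
proof -
  assume "0 \<le> x"
  have "(1 - x) * exp x \<le> exp (-x) * exp x"
    using exp_ge_add_one_self[of "-x"] by (simp add: mult_right_mono)
  also have "\<dots> = 1" by (simp add: exp_add[symmetric])
  finally show ?thesis by (simp add: algebra_simps)
qed

lemma one_minus_powr_le:
  fixes v q :: real
  assumes v: "0 \<le> v" "v \<le> 1" and q: "0 \<le> q"
  shows "(1 - v) powr q \<le> 1 - q * v + (q * v)^2"
proof -
  have pos: "0 < 1 + q * v" using v q by (simp add: add_pos_nonneg)
  have "(1 - v) powr q \<le> exp (-v) powr q"
    using v q by (intro powr_mono2) (auto simp: exp_ge_add_one_self[of "-v", simplified])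
  also have "\<dots> = exp (- (q * v))" by (simp add: powr_def)
  also have "\<dots> = inverse (exp (q * v))" by (simp add: exp_minus)
  also have "\<dots> \<le> inverse (1 + q * v)"
    using pos by (intro le_imp_inverse_le exp_ge_add_one_self)
  also have "\<dots> \<le> 1 - q * v + (q * v)^2"
  proof -
    have "(1 - q * v + (q * v)^2) * (1 + q * v) = 1 + (q * v)^3"
      by (simp add: power2_eq_square power3_eq_cube algebra_simps)
    also have "\<dots> \<ge> 1" using v q by simp
    finally show ?thesis using pos by (simp add: field_simps)
  qed
  finally show ?thesis .
qed

lemma one_plus_powr_le:
  fixes u q rho :: real
  assumes u: "0 \<le> u" and q: "2 \<le> q" and rho: "0 < rho"
    and small: "(q - 2) * u \<le> ln (1 / rho)"
  shows "(1 + u) powr q \<le> 1 + q * u + (q * u)^2 / rho"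
proof -
  define x where "x = (q - 2) * u"
  define E where "E = exp x"
  have x0: "0 \<le> x" unfolding x_def using u q by simp
  have E_le: "E \<le> 1 / rho"
  proof -
    have "exp x \<le> exp (ln (1 / rho))" using small by (simp add: x_def)
    thus ?thesis unfolding E_def using rho by simp
  qed
  have "(1 + u) powr (q - 2) = exp ((q - 2) * ln (1 + u))" using u by (simp add: powr_def)
  also have "\<dots> \<le> E"
    unfolding E_def x_def using q u by (intro exp_mono mult_left_mono) (auto intro: ln_add_one_self_le_self)
  finally have P_le: "(1 + u) powr (q - 2) \<le> E" .
  have "(1 + u) powr q = (1 + u) powr 2 * (1 + u) powr (q - 2)"
    by (simp flip: powr_add)
  also have "\<dots> = (1 + u)^2 * (1 + u) powr (q - 2)"
    using u by (simp add: powr_numeral)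
  also have "\<dots> \<le> (1 + u)^2 * E" using P_le by (simp add: mult_left_mono)
  finally have lhs: "(1 + u) powr q \<le> (1 + u)^2 * E" .
  have em: "E - 1 \<le> x * E" unfolding E_def by (rule exp_minus_one_le[OF x0])
  have "E - 1 - x \<le> x * (E - 1)" using em by (simp add: algebra_simps)
  also have "\<dots> \<le> x^2 * E" using mult_left_mono[OF em x0] by (simp add: power2_eq_square mult.assoc)
  finally have em2: "E - 1 - x \<le> x^2 * E" .
  have "(1 + u)^2 * E - 1 - q * u = (E - 1 - x) + 2 * u * (E - 1) + u^2 * E"
    unfolding x_def by (simp add: power2_eq_square algebra_simps)
  also have "\<dots> \<le> x^2 * E + 2 * u * (x * E) + u^2 * E"
    using em em2 u by (intro add_mono mult_left_mono) auto
  also have "\<dots> = ((q - 1) * u)^2 * E" unfolding x_def by (simp add: power2_eq_square algebra_simps)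
  also have "\<dots> \<le> (q * u)^2 * (1 / rho)"
  proof (rule mult_mono)
    show "((q - 1) * u)^2 \<le> (q * u)^2" using q u by (intro power_mono mult_right_mono) auto
  qed (use E_le in \<open>auto simp: E_def\<close>)
  finally show ?thesis using lhs by simp
qed

lemma noise_gain_ge_one:
  fixes q rho g :: real
  assumes "2 \<le> q" "0 < rho" "rho < 1" "1 + 2 * (q - 2) / ln (1 / rho) \<le> g"
  shows "1 \<le> g"
proof -
  have "0 \<le> 2 * (q - 2) / ln (1 / rho)" using assms by simp
  thus ?thesis using assms(4) by linarith
qed

lemma abs_one_plus_powr_le:
  fixes u q rho g :: real
  assumes q: "2 \<le> q" and rho: "0 < rho" "rho \<le> 1/3"
    and g: "1 + 2 * (q - 2) / ln (1 / rho) \<le> g"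
  shows "\<bar>1 + u\<bar> powr q \<le> 1 + q * u + q^2 / (2 * rho^2) * u^2 + g powr q * \<bar>u\<bar> powr q"
proof -
  define C where "C = q^2 / (2 * rho^2)"
  have L: "0 < ln (1 / rho)" using rho by simp
  have g1: "1 \<le> g" using noise_gain_ge_one[OF q rho(1) _ g] rho(2) by simp
  have rho_half: "2 * rho \<le> 1" using rho by simp
  have "2 * rho^2 \<le> 1" using rho mult_mono[of rho "1/3" rho "1/3"] by (simp add: power2_eq_square)
  hence "q^2 * (2 * rho^2) \<le> q^2" using mult_left_mono[of _ 1 "q^2"] by simp
  hence "q^2 \<le> C" unfolding C_def using rho by (simp add: field_simps)
  hence quad: "(q * u)^2 \<le> C * u^2" by (simp add: power_mult_distrib mult_right_mono)
  have tail_nonneg: "0 \<le> g powr q * \<bar>u\<bar> powr q" by simp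
  \<comment> \<open>the choice of \<open>g\<close> makes \<open>(q - 2) u \<le> ln (1/\<rho>)\<close> whenever \<open>g u < 1 + u\<close>\<close>
  consider "0 \<le> u" "1 + u \<le> g * u" | "0 \<le> u" "g * u < 1 + u" | "-1 \<le> u" "u < 0" | "u < -1"
    by linarith
  then have "\<bar>1 + u\<bar> powr q \<le> 1 + q * u + C * u^2 + g powr q * \<bar>u\<bar> powr q"
  proof cases
    case 1
    have "\<bar>1 + u\<bar> powr q \<le> (g * u) powr q" using 1 q by (intro powr_mono2) auto
    also have "\<dots> = g powr q * \<bar>u\<bar> powr q" using 1 g1 by (simp add: powr_mult)
    finally have "\<bar>1 + u\<bar> powr q \<le> g powr q * \<bar>u\<bar> powr q" .
    moreover have "0 \<le> q * u" "0 \<le> (q * u)^2" using 1 q by simp_all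
    ultimately show ?thesis using quad by linarith
  next
    case 2
    have "(g - 1) * u < 1" using 2 by (simp add: algebra_simps)
    moreover have "2 * (q - 2) / ln (1 / rho) * u \<le> (g - 1) * u" using g 2 by (intro mult_right_mono) auto
    ultimately have "2 * (q - 2) / ln (1 / rho) * u < 1" by linarith
    hence "(q - 2) * u \<le> ln (1 / rho)" using L q 2 by (simp add: field_simps)
    hence "\<bar>1 + u\<bar> powr q \<le> 1 + q * u + (q * u)^2 / rho"
      using one_plus_powr_le[OF 2(1) q rho(1)] 2 by simp
    also have "(q * u)^2 / rho \<le> C * u^2"
    proof -
      have "2 * rho^2 \<le> rho" using mult_left_mono[OF rho_half] rho by (simp add: power2_eq_square)
      hence "1 / rho \<le> 1 / (2 * rho^2)" using rho by (intro divide_left_mono) auto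
      hence "(q * u)^2 * (1 / rho) \<le> (q * u)^2 * (1 / (2 * rho^2))" by (rule mult_left_mono) simp
      thus ?thesis unfolding C_def by (simp add: power_mult_distrib)
    qed
    finally show ?thesis using tail_nonneg by linarith
  next
    case 3
    have "\<bar>1 + u\<bar> powr q \<le> 1 + q * u + (q * u)^2"
      using one_minus_powr_le[of "-u" q] 3 q by simp
    thus ?thesis using quad tail_nonneg by linarith
  next
    case 4
    have "\<bar>1 + u\<bar> powr q \<le> \<bar>u\<bar> powr q" using 4 q by (intro powr_mono2) auto
    also have "\<dots> \<le> g powr q * \<bar>u\<bar> powr q"
      using g1 q mult_right_mono[of 1 "g powr q" "\<bar>u\<bar> powr q"] by (simp add: ge_one_powr_ge_zero)
    finally have "\<bar>1 + u\<bar> powr q \<le> g powr q * \<bar>u\<bar> powr q" .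
    moreover have "1 + q * u + (q * u)^2 = (q * u + 1/2)^2 + 3/4"
      by (simp add: power2_eq_square algebra_simps)
    ultimately show ?thesis using quad zero_le_power2[of "q * u + 1/2"] by linarith
  qed
  thus ?thesis unfolding C_def .
qed

lemma convex_on_powr_nonneg:
  assumes m: "1 \<le> m"
  shows "convex_on {0..} (\<lambda>x::real. x powr m)"
proof (rule convex_onI)
  have scale: "(t * a) powr m \<le> t * a powr m" if "0 \<le> t" "t \<le> 1" "0 \<le> a" for t a :: real
  proof -
    have "t powr m \<le> t" using powr_mono'[of 1 m t] that m by simp
    thus ?thesis using that by (simp add: powr_mult mult_right_mono)
  qed
  fix t x y :: real
  assume t: "0 < t" "t < 1" and xy: "x \<in> {0..}" "y \<in> {0..}"
  consider "0 < x" "0 < y" | "x = 0" | "y = 0" using xy by force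
  thus "((1 - t) *\<^sub>R x + t *\<^sub>R y) powr m \<le> (1 - t) * x powr m + t * y powr m"
  proof cases
    case 1
    thus ?thesis using convex_onD[OF powr_convex[OF m], of t x y] t by simp
  qed (use scale t xy in auto)
qed simp

lemma powr_ge_tangent:
  fixes a t m :: real
  assumes a: "0 < a" and t: "0 \<le> t" and m: "1 \<le> m"
  shows "a powr m + m * a powr (m - 1) * t \<le> (a + t) powr m"
proof -
  have "m * a powr (m - 1) * ((a + t) - a) \<le> (a + t) powr m - a powr m"
  proof (rule convex_on_imp_above_tangent[where A = "{0<..}"])
    show "convex_on {0<..} (\<lambda>x. x powr m)" using powr_convex[OF m] .
    show "((\<lambda>x. x powr m) has_real_derivative m * a powr (m - 1)) (at a within {0<..})"
      using has_real_derivative_powr[OF a] by (rule has_field_derivative_at_within)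
  qed (use a t in \<open>auto simp: interior_open\<close>)
  thus ?thesis by simp
qed

lemma power2_powr_half: "((z::real)^2) powr (q / 2) = \<bar>z\<bar> powr q"
proof -
  have "z^2 = \<bar>z\<bar> powr 2" by simp
  hence "(z^2) powr (q / 2) = (\<bar>z\<bar> powr 2) powr (q / 2)" by (rule arg_cong)
  also have "\<dots> = \<bar>z\<bar> powr (2 * (q / 2))" by (rule powr_powr)
  finally show ?thesis by simp
qed

lemma sqrt_powr: "0 \<le> x \<Longrightarrow> sqrt x powr q = x powr (q / 2)"
  by (simp add: powr_half_sqrt[symmetric] powr_powr)

text \<open>\<open>1 + 2x + s\<^sup>2\<close> is the convex combination of \<open>(1 - s)\<^sup>2\<close> and \<open>(1 + s)\<^sup>2\<close> whose
  weights give \<open>\<plusminus>s\<close> the mean \<open>x\<close>; convexity of \<open>t powr (q/2)\<close> reduces the claim to the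
  scalar bound at \<open>u = \<plusminus>s\<close>.\<close>
lemma two_point_powr_le:
  fixes x s q rho g :: real
  assumes xs: "\<bar>x\<bar> \<le> s" and q: "2 \<le> q" and rho: "0 < rho" "rho \<le> 1/3"
    and g: "1 + 2 * (q - 2) / ln (1 / rho) \<le> g"
  shows "(1 + 2 * x + s^2) powr (q / 2)
    \<le> 1 + q * x + q^2 / (2 * rho^2) * s^2 + g powr q * s powr q"
proof (cases "s = 0")
  case True
  thus ?thesis using xs by simp
next
  case False
  define C where "C = q^2 / (2 * rho^2)"
  have s: "0 < s" using xs False by linarith
  define t where "t = (x + s) / (2 * s)"
  have t: "0 \<le> t" "t \<le> 1" unfolding t_def using xs s by auto
  have x_eq: "x = s * (2 * t - 1)" unfolding t_def using s by (simp add: field_simps)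
  have "1 + 2 * x + s^2 = (1 - t) * (1 + (- s))^2 + t * (1 + s)^2"
    unfolding x_eq by (simp add: power2_eq_square algebra_simps)
  hence "(1 + 2 * x + s^2) powr (q / 2)
      \<le> (1 - t) * ((1 + (- s))^2) powr (q / 2) + t * ((1 + s)^2) powr (q / 2)"
    using convex_onD[OF convex_on_powr_nonneg, of "q / 2" t "(1 + (- s))^2" "(1 + s)^2"] q t
    by simp
  also have "\<dots> = (1 - t) * \<bar>1 + (- s)\<bar> powr q + t * \<bar>1 + s\<bar> powr q"
    by (simp only: power2_powr_half)
  also have "\<dots> \<le> (1 - t) * (1 + q * (- s) + C * (- s)^2 + g powr q * \<bar>- s\<bar> powr q)
      + t * (1 + q * s + C * s^2 + g powr q * \<bar>s\<bar> powr q)"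
    unfolding C_def using abs_one_plus_powr_le[OF q rho g, of "- s"] abs_one_plus_powr_le[OF q rho g, of s] t
    by (intro add_mono mult_left_mono) auto
  also have "\<dots> = 1 + q * x + C * s^2 + g powr q * s powr q"
    unfolding x_eq using s by (simp add: power2_eq_square algebra_simps)
  finally show ?thesis unfolding C_def .
qed

lemma quadratic_powr_le:
  fixes a s p q rho g :: real
  assumes a: "0 < a" and s: "0 \<le> s" and cs: "p^2 \<le> a * s"
    and q: "2 \<le> q" and rho: "0 < rho" "rho \<le> 1/3"
    and g: "1 + 2 * (q - 2) / ln (1 / rho) \<le> g"
  shows "(a + 2 * (rho / sqrt q) * p + (rho / sqrt q)^2 * s) powr (q / 2)
    \<le> a powr (q / 2) + q * (rho / sqrt q) * a powr (q / 2 - 1) * p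
       + q / 2 * a powr (q / 2 - 1) * s + (rho * g / sqrt q) powr q * s powr (q / 2)"
proof -
  define r where "r = rho / sqrt q"
  define m where "m = q / 2"
  have r2: "r^2 = rho^2 / q" unfolding r_def using q by (simp add: power_divide)
  have r: "0 < r" unfolding r_def using rho q by simp
  have g0: "0 \<le> g" using noise_gain_ge_one[OF q rho(1) _ g] rho(2) by simp
  define x where "x = r * p / a"
  define t where "t = sqrt (r^2 * s / a)"
  have t2: "t^2 = r^2 * s / a" unfolding t_def using a s by simp
  have t0: "0 \<le> t" unfolding t_def using a s by simp
  have "x^2 = r^2 * p^2 / a^2" unfolding x_def by (simp add: power_divide power_mult_distrib)
  also have "\<dots> \<le> r^2 * (a * s) / a^2" using cs by (intro divide_right_mono mult_left_mono) auto
  also have "\<dots> = t^2" unfolding t2 using a by (simp add: power2_eq_square)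
  finally have xt: "\<bar>x\<bar> \<le> t" using t0 abs_le_square_iff[of x t] by simp
  have "a + 2 * r * p + r^2 * s = a * (1 + 2 * x + t^2)"
    unfolding x_def t2 using a by (simp add: field_simps)
  hence "(a + 2 * r * p + r^2 * s) powr m = a powr m * (1 + 2 * x + t^2) powr m"
    by (simp add: powr_mult)
  also have "\<dots> \<le> a powr m * (1 + q * x + q^2 / (2 * rho^2) * t^2 + g powr q * t powr q)"
    unfolding m_def using two_point_powr_le[OF xt q rho g] by (intro mult_left_mono) auto
  also have "\<dots> = a powr m + q * r * a powr (m - 1) * p + q / 2 * a powr (m - 1) * s
      + (r * g) powr q * s powr m"
  proof -
    have e1: "a powr m * x = a powr (m - 1) * (r * p)" unfolding x_def using a by (simp add: powr_diff)
    have e2: "a powr m * (q^2 / (2 * rho^2) * t^2) = q / 2 * a powr (m - 1) * s"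
      unfolding t2 r2 using a rho q by (simp add: powr_diff power2_eq_square field_simps)
    have e3: "a powr m * t powr q = r powr q * s powr m"
      unfolding m_def using a s r
      by (simp add: sqrt_powr t_def powr_mult powr_divide power2_powr_half)
    have "a powr m * (1 + q * x + q^2 / (2 * rho^2) * t^2 + g powr q * t powr q)
      = a powr m + q * (a powr m * x) + a powr m * (q^2 / (2 * rho^2) * t^2) + g powr q * (a powr m * t powr q)"
      by (simp add: algebra_simps)
    also have "\<dots> = a powr m + q * r * a powr (m - 1) * p + q / 2 * a powr (m - 1) * s
      + (r * g) powr q * s powr m"
      unfolding e1 e2 e3 using r g0 by (simp add: powr_mult)
    finally show ?thesis .
  qed
  finally show ?thesis unfolding r_def m_def by (simp add: mult.assoc)
qed

section \<open>The one-coordinate inequality for vector-valued functions\<close>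

lemma weighted_Cauchy_Schwarz:
  fixes w a b :: "'b \<Rightarrow> real"
  assumes "\<And>y. y \<in> Y \<Longrightarrow> 0 \<le> w y"
  shows "(\<Sum>y\<in>Y. w y * a y * b y)^2 \<le> (\<Sum>y\<in>Y. w y * (a y)^2) * (\<Sum>y\<in>Y. w y * (b y)^2)"
proof -
  have "(\<Sum>y\<in>Y. (sqrt (w y) * a y) * (sqrt (w y) * b y))^2
     \<le> (\<Sum>y\<in>Y. (sqrt (w y) * a y)^2) * (\<Sum>y\<in>Y. (sqrt (w y) * b y)^2)"
    by (rule Cauchy_Schwarz_ineq_sum)
  moreover have "(\<Sum>y\<in>Y. (sqrt (w y) * a y) * (sqrt (w y) * b y)) = (\<Sum>y\<in>Y. w y * a y * b y)"
    using assms by (intro sum.cong) (auto simp: algebra_simps)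
  moreover have "(\<Sum>y\<in>Y. (sqrt (w y) * c y)^2) = (\<Sum>y\<in>Y. w y * (c y)^2)" for c
    using assms by (intro sum.cong) (auto simp: power_mult_distrib)
  ultimately show ?thesis by simp
qed

lemma averaged_quadratic_powr_le:
  fixes mu p s :: "'c \<Rightarrow> real"
  assumes mu: "\<And>c. c \<in> Om \<Longrightarrow> 0 \<le> mu c" "sum mu Om = 1"
    and a: "0 \<le> a" and s: "\<And>c. 0 \<le> s c" and cs: "\<And>c. (p c)^2 \<le> a * s c"
    and Ep: "(\<Sum>c\<in>Om. mu c * p c) = 0"
    and q: "2 \<le> q" and rho: "0 < rho" "rho \<le> 1/3"
    and g: "1 + 2 * (q - 2) / ln (1 / rho) \<le> g"
  shows "(\<Sum>c\<in>Om. mu c * (a + 2 * (rho / sqrt q) * p c + (rho / sqrt q)^2 * s c) powr (q / 2))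
     \<le> (a + (\<Sum>c\<in>Om. mu c * s c)) powr (q / 2)
       + (rho * g / sqrt q) powr q * (\<Sum>c\<in>Om. mu c * s c powr (q / 2))"
proof -
  define r where "r = rho / sqrt q"
  define K where "K = (rho * g / sqrt q) powr q"
  define m where "m = q / 2"
  have m: "1 \<le> m" unfolding m_def using q by simp
  have Es: "0 \<le> (\<Sum>c\<in>Om. mu c * s c)" using mu s by (intro sum_nonneg) auto
  have "(\<Sum>c\<in>Om. mu c * (a + 2 * r * p c + r^2 * s c) powr m)
     \<le> (a + (\<Sum>c\<in>Om. mu c * s c)) powr m + K * (\<Sum>c\<in>Om. mu c * s c powr m)"
  proof (cases "a = 0")
    case True
    have "(r^2) powr m = r powr q" unfolding m_def using power2_powr_half[of r q] rho q by (simp add: r_def)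
    also have "\<dots> \<le> K"
      unfolding r_def K_def using rho q noise_gain_ge_one[OF q rho(1) _ g]
      by (intro powr_mono2 divide_right_mono) (auto intro: mult_right_mono[of 1 g rho, simplified])
    finally have rK: "(r^2) powr m \<le> K" .
    have "p c = 0" for c using cs[of c] True by simp
    hence "(\<Sum>c\<in>Om. mu c * (a + 2 * r * p c + r^2 * s c) powr m)
        = (\<Sum>c\<in>Om. mu c * ((r^2) powr m * s c powr m))"
      using True by (simp add: powr_mult)
    also have "\<dots> \<le> (\<Sum>c\<in>Om. mu c * (K * s c powr m))"
      using mu rK by (intro sum_mono mult_left_mono mult_right_mono) auto
    also have "\<dots> \<le> (a + (\<Sum>c\<in>Om. mu c * s c)) powr m + K * (\<Sum>c\<in>Om. mu c * s c powr m)"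
      by (simp add: sum_distrib_left algebra_simps)
    finally show ?thesis .
  next
    case False
    hence a: "0 < a" using a by simp
    have "(\<Sum>c\<in>Om. mu c * (a + 2 * r * p c + r^2 * s c) powr m)
       \<le> (\<Sum>c\<in>Om. mu c * (a powr m + q * r * a powr (m - 1) * p c
            + q / 2 * a powr (m - 1) * s c + K * s c powr m))"
      using mu quadratic_powr_le[OF a s cs q rho g] unfolding r_def K_def m_def
      by (intro sum_mono mult_left_mono) auto
    also have "\<dots> = (\<Sum>c\<in>Om. mu c) * a powr m + q * r * a powr (m - 1) * (\<Sum>c\<in>Om. mu c * p c)
        + m * a powr (m - 1) * (\<Sum>c\<in>Om. mu c * s c) + K * (\<Sum>c\<in>Om. mu c * s c powr m)"
      unfolding m_def by (simp add: sum.distrib sum_distrib_left sum_distrib_right algebra_simps)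
    also have "\<dots> \<le> (a + (\<Sum>c\<in>Om. mu c * s c)) powr m + K * (\<Sum>c\<in>Om. mu c * s c powr m)"
      using powr_ge_tangent[OF a Es m] by (simp add: mu(2) Ep)
    finally show ?thesis .
  qed
  thus ?thesis unfolding r_def K_def m_def .
qed

lemma noise_step_vector_le:
  fixes w :: "'b \<Rightarrow> real" and U :: "'b \<Rightarrow> 'c \<Rightarrow> real" and mu :: "'c \<Rightarrow> real"
  assumes w: "\<And>y. y \<in> Y \<Longrightarrow> 0 \<le> w y"
    and mu: "\<And>c. c \<in> Om \<Longrightarrow> 0 \<le> mu c" "sum mu Om = 1"
    and q: "2 \<le> q" and rho: "0 < rho" "rho \<le> 1/3"
    and g: "1 + 2 * (q - 2) / ln (1 / rho) \<le> g"
  defines "A \<equiv> \<lambda>y. \<Sum>b\<in>Om. mu b * U y b"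
  shows "(\<Sum>c\<in>Om. mu c * (\<Sum>y\<in>Y. w y * ((rho / sqrt q) * U y c + (1 - rho / sqrt q) * A y)^2) powr (q / 2))
     \<le> (\<Sum>c\<in>Om. mu c * (\<Sum>y\<in>Y. w y * (U y c)^2)) powr (q / 2)
       + (rho * g / sqrt q) powr q * (\<Sum>c\<in>Om. mu c * (\<Sum>y\<in>Y. w y * (U y c - A y)^2) powr (q / 2))"
proof -
  define a where "a = (\<Sum>y\<in>Y. w y * (A y)^2)"
  define s where "s = (\<lambda>c. \<Sum>y\<in>Y. w y * (U y c - A y)^2)"
  define p where "p = (\<lambda>c. \<Sum>y\<in>Y. w y * A y * (U y c - A y))"
  have a0: "0 \<le> a" unfolding a_def using w by (intro sum_nonneg) auto
  have s0: "0 \<le> s c" for c unfolding s_def using w by (intro sum_nonneg) auto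
  have cs: "(p c)^2 \<le> a * s c" for c
    unfolding p_def a_def s_def by (rule weighted_Cauchy_Schwarz[OF w])
  have mean_zero: "(\<Sum>c\<in>Om. mu c * (U y c - A y)) = 0" for y
    using mu(2) by (simp add: A_def right_diff_distrib sum_subtractf sum_distrib_right[symmetric])
  have Ep: "(\<Sum>c\<in>Om. mu c * p c) = 0"
  proof -
    have "(\<Sum>c\<in>Om. mu c * p c) = (\<Sum>y\<in>Y. w y * A y * (\<Sum>c\<in>Om. mu c * (U y c - A y)))"
      unfolding p_def by (simp add: sum_distrib_left sum.swap[of _ Om] algebra_simps)
    thus ?thesis by (simp add: mean_zero)
  qed
  have expand: "(\<Sum>y\<in>Y. w y * (t * U y c + (1 - t) * A y)^2) = a + 2 * t * p c + t^2 * s c" for t c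
  proof -
    have "(\<Sum>y\<in>Y. w y * (t * U y c + (1 - t) * A y)^2)
      = (\<Sum>y\<in>Y. w y * (A y)^2 + 2 * t * (w y * A y * (U y c - A y)) + t^2 * (w y * (U y c - A y)^2))"
      by (intro sum.cong) (auto simp: power2_eq_square algebra_simps)
    thus ?thesis unfolding a_def p_def s_def by (simp add: sum.distrib sum_distrib_left)
  qed
  have pythagoras: "(\<Sum>c\<in>Om. mu c * (\<Sum>y\<in>Y. w y * (U y c)^2)) = a + (\<Sum>c\<in>Om. mu c * s c)"
  proof -
    have "(\<Sum>y\<in>Y. w y * (U y c)^2) = a + 2 * p c + s c" for c
      using expand[of 1 c] by simp
    hence "(\<Sum>c\<in>Om. mu c * (\<Sum>y\<in>Y. w y * (U y c)^2))
        = (\<Sum>c\<in>Om. mu c) * a + 2 * (\<Sum>c\<in>Om. mu c * p c) + (\<Sum>c\<in>Om. mu c * s c)"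
      by (simp add: sum.distrib sum_distrib_left sum_distrib_right algebra_simps)
    thus ?thesis using mu(2) Ep by simp
  qed
  show ?thesis
    using averaged_quadratic_powr_le[OF mu a0 s0 cs Ep q rho g]
    by (simp only: expand pythagoras s_def)
qed

section \<open>The averaging operators\<close>

lemma avgE_commute: "avgE Om mu i (avgE Om mu j g) = avgE Om mu j (avgE Om mu i g)"
proof (cases "i = j")
  case False
  show ?thesis
  proof
    fix x
    have "avgE Om mu i (avgE Om mu j g) x = (\<Sum>a\<in>Om. \<Sum>b\<in>Om. mu a * (mu b * g (x(i := a, j := b))))"
      unfolding avgE_def by (simp add: sum_distrib_left)
    also have "\<dots> = (\<Sum>b\<in>Om. \<Sum>a\<in>Om. mu a * (mu b * g (x(i := a, j := b))))" by (rule sum.swap)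
    also have "\<dots> = avgE Om mu j (avgE Om mu i g) x"
      unfolding avgE_def using False by (simp add: sum_distrib_left fun_upd_twist algebra_simps)
    finally show "avgE Om mu i (avgE Om mu j g) x = avgE Om mu j (avgE Om mu i g) x" .
  qed
qed simp

lemma avgE_diff: "avgE Om mu i (\<lambda>z. g z - h z) x = avgE Om mu i g x - avgE Om mu i h x"
  unfolding avgE_def by (simp add: sum_subtractf right_diff_distrib)

lemma opL_eq: "opL Om mu i g = (\<lambda>z. g z - avgE Om mu i g z)"
  by (rule ext) (simp add: opL_def)

lemma avgE_opL_commute: "avgE Om mu j (opL Om mu i g) = opL Om mu i (avgE Om mu j g)"
  by (rule ext) (simp add: opL_eq avgE_diff avgE_commute[of Om mu i j g])

lemma opL_commute: "opL Om mu i (opL Om mu j g) = opL Om mu j (opL Om mu i g)"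
  by (rule ext) (simp add: opL_eq avgE_diff avgE_commute[of Om mu i j g])

lemma foldr_opL_insort: "foldr (opL Om mu) (insort j xs) g = opL Om mu j (foldr (opL Om mu) xs g)"
  by (induction xs) (auto simp: opL_commute)

lemma opLS_empty [simp]: "opLS Om mu {} g = g"
  unfolding opLS_def by simp

lemma opLS_insert:
  assumes "finite S" "j \<notin> S"
  shows "opLS Om mu (insert j S) g = opL Om mu j (opLS Om mu S g)"
  unfolding opLS_def using assms by (simp add: sorted_list_of_set_insert foldr_opL_insort)

lemma opL_linear:
  "opL Om mu i (\<lambda>z. a * g z + b * h z) = (\<lambda>z. a * opL Om mu i g z + b * opL Om mu i h z)"
  by (rule ext) (simp add: opL_def avgE_def sum.distrib sum_distrib_left algebra_simps)

lemma opLS_linear: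
  "finite S \<Longrightarrow> opLS Om mu S (\<lambda>z. a * g z + b * h z) = (\<lambda>z. a * opLS Om mu S g z + b * opLS Om mu S h z)"
  by (induction S rule: finite_induct) (simp_all add: opLS_insert opL_linear)

lemma opL_fun_upd: "i \<noteq> j \<Longrightarrow> opL Om mu i (\<lambda>y. g (y(j := c))) = (\<lambda>z. opL Om mu i g (z(j := c)))"
  by (rule ext) (simp add: opL_def avgE_def fun_upd_twist)

lemma opLS_fun_upd:
  "finite S \<Longrightarrow> j \<notin> S \<Longrightarrow> opLS Om mu S (\<lambda>y. g (y(j := c))) = (\<lambda>z. opLS Om mu S g (z(j := c)))"
proof (induction S rule: finite_induct)
  case (insert i S)
  hence ij: "i \<noteq> j" and jS: "j \<notin> S" by auto
  note IH = insert.IH[OF jS]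
  have "opLS Om mu (insert i S) (\<lambda>y. g (y(j := c))) = opL Om mu i (opLS Om mu S (\<lambda>y. g (y(j := c))))"
    by (rule opLS_insert[OF insert.hyps])
  also have "\<dots> = (\<lambda>z. opL Om mu i (opLS Om mu S g) (z(j := c)))"
    by (simp only: IH opL_fun_upd[OF ij])
  also have "\<dots> = (\<lambda>z. opLS Om mu (insert i S) g (z(j := c)))"
    by (simp only: opLS_insert[OF insert.hyps])
  finally show ?case .
qed simp

lemma avgE_opLS_commute:
  "finite S \<Longrightarrow> avgE Om mu j (opLS Om mu S g) = opLS Om mu S (avgE Om mu j g)"
  by (induction S rule: finite_induct) (simp_all add: opLS_insert avgE_opL_commute)

section \<open>Expectations over product spaces and the noise operator\<close>

lemma sum_PiE_insert:
  assumes "j \<notin> I"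
  shows "(\<Sum>y\<in>PiE (insert j I) (\<lambda>_. Om). h y) = (\<Sum>b\<in>Om. \<Sum>y\<in>PiE I (\<lambda>_. Om). h (y(j := b)))"
proof -
  have "(\<Sum>y\<in>PiE (insert j I) (\<lambda>_. Om). h y) = (\<Sum>y\<in>(\<lambda>(b, y). y(j := b)) ` (Om \<times> PiE I (\<lambda>_. Om)). h y)"
    by (simp add: PiE_insert_eq)
  also have "\<dots> = (\<Sum>(b, y)\<in>Om \<times> PiE I (\<lambda>_. Om). h (y(j := b)))"
    using inj_combinator[OF assms, of "\<lambda>_. Om"] by (subst sum.reindex) (auto simp: case_prod_beta)
  also have "\<dots> = (\<Sum>b\<in>Om. \<Sum>y\<in>PiE I (\<lambda>_. Om). h (y(j := b)))"
    by (rule sum.cartesian_product[symmetric])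
  finally show ?thesis .
qed

lemma prod_insert_fun_upd:
  assumes "finite I" "j \<notin> I"
  shows "(\<Prod>i\<in>insert j I. F i ((y(j := b)) i)) = F j b * (\<Prod>i\<in>I. F i (y i))"
proof -
  have "(\<Prod>i\<in>I. F i ((y(j := b)) i)) = (\<Prod>i\<in>I. F i (y i))"
    using assms by (intro prod.cong) auto
  thus ?thesis using assms by simp
qed

lemma expS_insert:
  assumes "finite I" "j \<notin> I"
  shows "expS Om mu (insert j I) g = (\<Sum>c\<in>Om. mu c * expS Om mu I (\<lambda>x. g (x(j := c))))"
proof -
  have "expS Om mu (insert j I) g
      = (\<Sum>c\<in>Om. \<Sum>x\<in>PiE I (\<lambda>_. Om). (\<Prod>i\<in>insert j I. mu ((x(j := c)) i)) * g (x(j := c)))"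
    unfolding expS_def by (rule sum_PiE_insert[OF assms(2)])
  also have "\<dots> = (\<Sum>c\<in>Om. mu c * expS Om mu I (\<lambda>x. g (x(j := c))))"
    unfolding expS_def prod_insert_fun_upd[OF assms, of "\<lambda>i. mu"] by (simp add: sum_distrib_left mult.assoc)
  finally show ?thesis .
qed

lemma expS_mono:
  assumes "\<And>a. a \<in> Om \<Longrightarrow> 0 \<le> mu a" "\<And>x. x \<in> PiE S (\<lambda>_. Om) \<Longrightarrow> g x \<le> h x"
  shows "expS Om mu S g \<le> expS Om mu S h"
  unfolding expS_def
proof (intro sum_mono mult_left_mono)
  fix x assume x: "x \<in> PiE S (\<lambda>_. Om)"
  thus "g x \<le> h x" by (rule assms(2))
  show "0 \<le> (\<Prod>i\<in>S. mu (x i))" using x assms(1) by (intro prod_nonneg) (auto simp: PiE_iff)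
qed

lemma expS_sum: "expS Om mu S (\<lambda>x. \<Sum>c\<in>C. G c x) = (\<Sum>c\<in>C. expS Om mu S (G c))"
  unfolding expS_def by (simp add: sum_distrib_left sum.swap[of _ C])

lemma expS_add: "expS Om mu S (\<lambda>x. g x + h x) = expS Om mu S g + expS Om mu S h"
  unfolding expS_def by (simp add: sum.distrib distrib_left)

lemma expS_cmult: "expS Om mu S (\<lambda>x. a * g x) = a * expS Om mu S g"
  unfolding expS_def by (simp add: sum_distrib_left algebra_simps)

definition noise ::
    "'a set \<Rightarrow> ('a \<Rightarrow> real) \<Rightarrow> nat set \<Rightarrow> real \<Rightarrow> ((nat \<Rightarrow> 'a) \<Rightarrow> real) \<Rightarrow> (nat \<Rightarrow> 'a) \<Rightarrow> real"
  where
  "noise Om mu I r f x =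
     (\<Sum>y\<in>PiE I (\<lambda>_. Om). (\<Prod>i\<in>I. r * (if y i = x i then 1 else 0) + (1 - r) * mu (y i)) * f y)"

lemma noiseT_eq_noise: "noiseT Om mu n r f = noise Om mu {0..<n} r f"
  unfolding noiseT_def noise_def ..

lemma noise_kernel_sum:
  fixes r :: real and h :: "'a \<Rightarrow> real"
  assumes "finite Om" "c \<in> Om"
  shows "(\<Sum>b\<in>Om. (r * (if b = c then 1 else 0) + (1 - r) * mu b) * h b)
    = r * h c + (1 - r) * (\<Sum>b\<in>Om. mu b * h b)"
proof -
  have "(\<Sum>b\<in>Om. (r * (if b = c then 1 else 0) + (1 - r) * mu b) * h b)
      = (\<Sum>b\<in>Om. if b = c then r * h b else 0) + (\<Sum>b\<in>Om. (1 - r) * (mu b * h b))"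
    unfolding sum.distrib[symmetric] by (intro sum.cong) (auto simp: algebra_simps)
  thus ?thesis using assms by (simp add: sum_distrib_left)
qed

lemma noise_insert_fun_upd:
  assumes I: "finite I" "j \<notin> I" and Om: "finite Om" "c \<in> Om"
  shows "noise Om mu (insert j I) r f (x(j := c))
       = noise Om mu I r (\<lambda>y. r * f (y(j := c)) + (1 - r) * avgE Om mu j f y) x"
proof -
  define k where "k = (\<lambda>b e. r * (if b = e then 1 else 0) + (1 - r) * mu b)"
  have "noise Om mu (insert j I) r f (x(j := c))
     = (\<Sum>b\<in>Om. \<Sum>y\<in>PiE I (\<lambda>_. Om). k b c * ((\<Prod>i\<in>I. k (y i) (x i)) * f (y(j := b))))"
  proof -
    have "(\<Prod>i\<in>insert j I. k ((y(j := b)) i) ((x(j := c)) i)) = k b c * (\<Prod>i\<in>I. k (y i) (x i))" for y b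
    proof -
      have "(\<Prod>i\<in>I. k (y i) ((x(j := c)) i)) = (\<Prod>i\<in>I. k (y i) (x i))"
        using I by (intro prod.cong) auto
      thus ?thesis using prod_insert_fun_upd[OF I, of "\<lambda>i z. k z ((x(j := c)) i)" y b] by simp
    qed
    thus ?thesis unfolding noise_def sum_PiE_insert[OF I(2)] k_def by (simp add: mult.assoc)
  qed
  also have "\<dots> = (\<Sum>y\<in>PiE I (\<lambda>_. Om). (\<Prod>i\<in>I. k (y i) (x i)) * (\<Sum>b\<in>Om. k b c * f (y(j := b))))"
    by (subst sum.swap) (simp add: sum_distrib_left algebra_simps)
  also have "\<dots> = noise Om mu I r (\<lambda>y. r * f (y(j := c)) + (1 - r) * avgE Om mu j f y) x"
    unfolding noise_def k_def noise_kernel_sum[OF Om] avgE_def ..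
  finally show ?thesis .
qed

section \<open>Induction on the coordinates\<close>

lemma sum_Pow_insert:
  assumes "finite I" "j \<notin> I"
  shows "(\<Sum>S\<in>Pow (insert j I). h S) = (\<Sum>S\<in>Pow I. h S + h (insert j S))"
proof -
  have "inj_on (insert j) (Pow I)" using assms(2) by (auto simp: inj_on_def)
  moreover have "Pow I \<inter> insert j ` Pow I = {}" using assms(2) by auto
  ultimately show ?thesis
    unfolding Pow_insert using assms(1) by (simp add: sum.union_disjoint sum.reindex sum.distrib)
qed

lemma derivD_fun_upd:
  assumes "j \<notin> S"
  shows "derivD Om mu S x f (y(j := c)) = opLS Om mu S f ((\<lambda>i. if i \<in> S then x i else y i)(j := c))"
proof -
  have "(\<lambda>i. if i \<in> S then x i else (y(j := c)) i) = (\<lambda>i. if i \<in> S then x i else y i)(j := c)"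
    using assms by auto
  thus ?thesis unfolding derivD_def by simp
qed

lemma derivD_noisy_coordinate:
  assumes "finite S" "j \<notin> S"
  shows "derivD Om mu S x (\<lambda>y. r * f (y(j := c)) + (1 - r) * avgE Om mu j f y) y
    = r * derivD Om mu S x f (y(j := c)) + (1 - r) * (\<Sum>b\<in>Om. mu b * derivD Om mu S x f (y(j := b)))"
proof -
  have "derivD Om mu S x (\<lambda>y. r * f (y(j := c)) + (1 - r) * avgE Om mu j f y) y
      = r * opLS Om mu S (\<lambda>y. f (y(j := c))) (\<lambda>i. if i \<in> S then x i else y i)
        + (1 - r) * opLS Om mu S (avgE Om mu j f) (\<lambda>i. if i \<in> S then x i else y i)"
    unfolding derivD_def by (simp add: opLS_linear[OF assms(1)])
  thus ?thesis
    unfolding opLS_fun_upd[OF assms] avgE_opLS_commute[OF assms(1), symmetric] derivD_fun_upd[OF assms(2)]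
    by (simp add: avgE_def)
qed

lemma derivD_insert_fun_upd:
  assumes "finite S" "j \<notin> S"
  shows "derivD Om mu (insert j S) (x(j := c)) f y
    = derivD Om mu S x f (y(j := c)) - (\<Sum>b\<in>Om. mu b * derivD Om mu S x f (y(j := b)))"
proof -
  have "(\<lambda>i. if i \<in> insert j S then (x(j := c)) i else y i) = (\<lambda>i. if i \<in> S then x i else y i)(j := c)"
    by auto
  thus ?thesis unfolding derivD_fun_upd[OF assms(2)]
    by (simp add: derivD_def opLS_insert[OF assms] opL_def avgE_def)
qed

lemma derivD_noise_step_le:
  assumes P: "fin_prob_space Om mu" and I: "finite I" "j \<notin> I" "S \<subseteq> I"
    and q: "2 \<le> q" and rho: "0 < rho" "rho \<le> 1/3"
    and g: "1 + 2 * (q - 2) / ln (1 / rho) \<le> g"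
  defines "r \<equiv> rho / sqrt q"
  shows "(\<Sum>c\<in>Om. mu c * norm2 Om mu (I - S)
            (derivD Om mu S x (\<lambda>y. r * f (y(j := c)) + (1 - r) * avgE Om mu j f y)) powr q)
     \<le> norm2 Om mu (insert j I - S) (derivD Om mu S x f) powr q
       + (rho * g / sqrt q) powr q
         * (\<Sum>c\<in>Om. mu c * norm2 Om mu (I - S) (derivD Om mu (insert j S) (x(j := c)) f) powr q)"
proof -
  define Y where "Y = PiE (I - S) (\<lambda>_. Om)"
  define w where "w = (\<lambda>y::nat \<Rightarrow> 'a. \<Prod>i\<in>I - S. mu (y i))"
  define U where "U = (\<lambda>y c. derivD Om mu S x f (y(j := c)))"
  define A where "A = (\<lambda>y. \<Sum>b\<in>Om. mu b * U y b)"
  have mu: "\<And>a. a \<in> Om \<Longrightarrow> 0 \<le> mu a" "sum mu Om = 1"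
    using P unfolding fin_prob_space_def by auto
  have S: "finite S" "j \<notin> S" using I finite_subset by auto
  have w: "\<And>y. y \<in> Y \<Longrightarrow> 0 \<le> w y"
    unfolding Y_def w_def using mu by (auto intro!: prod_nonneg simp: PiE_iff)
  have norm2_eq: "norm2 Om mu (I - S) h = sqrt (\<Sum>y\<in>Y. w y * (h y)^2)" for h
    unfolding norm2_def expS_def Y_def w_def ..
  have IS: "insert j I - S = insert j (I - S)" and jIS: "j \<notin> I - S" using S(2) I(2) by auto
  have norm2_insert: "norm2 Om mu (insert j I - S) (derivD Om mu S x f)
      = sqrt (\<Sum>c\<in>Om. mu c * (\<Sum>y\<in>Y. w y * (U y c)^2))"
    unfolding norm2_def IS expS_insert[OF finite_Diff[OF I(1)] jIS]
    unfolding expS_def Y_def w_def U_def ..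
  have sq0: "0 \<le> (\<Sum>y\<in>Y. w y * (h y)^2)" for h using w by (intro sum_nonneg) auto
  have "0 \<le> (\<Sum>c\<in>Om. mu c * (\<Sum>y\<in>Y. w y * (U y c)^2))"
    using mu w by (intro sum_nonneg mult_nonneg_nonneg) auto
  moreover have "(\<Sum>c\<in>Om. mu c * (\<Sum>y\<in>Y. w y * (r * U y c + (1 - r) * A y)^2) powr (q / 2))
     \<le> (\<Sum>c\<in>Om. mu c * (\<Sum>y\<in>Y. w y * (U y c)^2)) powr (q / 2)
       + (rho * g / sqrt q) powr q * (\<Sum>c\<in>Om. mu c * (\<Sum>y\<in>Y. w y * (U y c - A y)^2) powr (q / 2))"
    unfolding r_def A_def by (rule noise_step_vector_le[OF w mu q rho g])
  ultimately show ?thesis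
    unfolding norm2_eq norm2_insert derivD_noisy_coordinate[OF S] derivD_insert_fun_upd[OF S]
    by (simp only: U_def A_def sqrt_powr sq0)
qed

lemma noise_moment_le:
  assumes P: "fin_prob_space Om mu" and q: "2 \<le> q" and rho: "0 < rho" "rho \<le> 1/3"
    and g: "1 + 2 * (q - 2) / ln (1 / rho) \<le> g" and I: "finite I"
  defines "K \<equiv> (rho * g / sqrt q) powr q"
  shows "expS Om mu I (\<lambda>x. \<bar>noise Om mu I (rho / sqrt q) f x\<bar> powr q)
    \<le> (\<Sum>S\<in>Pow I. K ^ card S * expS Om mu S (\<lambda>x. norm2 Om mu (I - S) (derivD Om mu S x f) powr q))"
  using I
proof (induction I arbitrary: f rule: finite_induct)
  case empty
  show ?case by (simp add: expS_def noise_def norm2_def derivD_def)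
next
  case (insert j I)
  define r where "r = rho / sqrt q"
  define F where "F = (\<lambda>c y. r * f (y(j := c)) + (1 - r) * avgE Om mu j f y)"
  define N where "N = (\<lambda>J S x h. norm2 Om mu (J - S) (derivD Om mu S x h) powr q)"
  define T where "T = (\<lambda>S. K ^ card S * expS Om mu S (\<lambda>x. N (insert j I) S x f))"
  have Om: "finite Om" and mu: "\<And>a. a \<in> Om \<Longrightarrow> 0 \<le> mu a"
    using P unfolding fin_prob_space_def by auto
  have K: "0 \<le> K" unfolding K_def by simp
  have "expS Om mu (insert j I) (\<lambda>x. \<bar>noise Om mu (insert j I) r f x\<bar> powr q)
      = (\<Sum>c\<in>Om. mu c * expS Om mu I (\<lambda>x. \<bar>noise Om mu I r (F c) x\<bar> powr q))"
    unfolding expS_insert[OF insert(1,2)] F_def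
    by (intro sum.cong refl) (simp add: noise_insert_fun_upd[OF insert(1,2) Om])
  also have "\<dots> \<le> (\<Sum>c\<in>Om. mu c * (\<Sum>S\<in>Pow I. K ^ card S * expS Om mu S (\<lambda>x. N I S x (F c))))"
    unfolding N_def r_def using mu insert.IH by (intro sum_mono mult_left_mono) auto
  also have "\<dots> = (\<Sum>S\<in>Pow I. K ^ card S * expS Om mu S (\<lambda>x. \<Sum>c\<in>Om. mu c * N I S x (F c)))"
    by (simp add: sum_distrib_left sum.swap[of _ Om] expS_sum expS_cmult algebra_simps)
  also have "\<dots> \<le> (\<Sum>S\<in>Pow I. K ^ card S * expS Om mu S (\<lambda>x. N (insert j I) S x f
      + K * (\<Sum>c\<in>Om. mu c * N I (insert j S) (x(j := c)) f)))"
  proof (intro sum_mono mult_left_mono[OF _ zero_le_power[OF K]] expS_mono[OF mu])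
    fix S x assume "S \<in> Pow I"
    then show "(\<Sum>c\<in>Om. mu c * N I S x (F c))
        \<le> N (insert j I) S x f + K * (\<Sum>c\<in>Om. mu c * N I (insert j S) (x(j := c)) f)"
      unfolding N_def F_def r_def K_def
      using derivD_noise_step_le[OF P insert(1,2) _ q rho g] insert(2) by (simp add: insert_Diff_if)
  qed
  also have "\<dots> = (\<Sum>S\<in>Pow I. T S + T (insert j S))"
  proof (intro sum.cong refl)
    fix S assume "S \<in> Pow I"
    hence S: "finite S" "j \<notin> S" and "insert j I - insert j S = I - S"
      using insert(1,2) finite_subset by auto
    thus "K ^ card S * expS Om mu S (\<lambda>x. N (insert j I) S x f + K * (\<Sum>c\<in>Om. mu c * N I (insert j S) (x(j := c)) f))
        = T S + T (insert j S)"
      unfolding T_def N_def expS_insert[OF S]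
      by (simp add: expS_add expS_cmult expS_sum algebra_simps)
  qed
  also have "\<dots> = (\<Sum>S\<in>Pow (insert j I). T S)"
    by (rule sum_Pow_insert[OF insert(1,2), symmetric])
  finally show ?case unfolding T_def N_def r_def .
qed

lemma power_powr_eq: "0 < (x::real) \<Longrightarrow> (x powr a) ^ k = x powr (a * k)"
proof -
  assume "0 < x"
  hence "(x powr a) ^ k = (x powr a) powr k" by (simp add: powr_realpow)
  thus ?thesis by (simp add: powr_powr)
qed

lemma powr_mult_nat_eq_power:
  fixes b q :: real and k :: nat
  assumes b: "0 < b" and q: "0 < q"
  shows "b powr (q * k) * q powr (- (q * k) / 2) = ((b / sqrt q) powr q) ^ k"
proof -
  have "(b / sqrt q) powr q = b powr q / q powr (q / 2)"
    using q by (simp add: powr_divide sqrt_powr)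
  also have "\<dots> = b powr q * q powr (- q / 2)"
    by (simp add: powr_minus_divide)
  finally have "((b / sqrt q) powr q) ^ k = (b powr q) ^ k * (q powr (- q / 2)) ^ k"
    by (simp only: power_mult_distrib)
  also have "\<dots> = b powr (q * k) * q powr (- q / 2 * k)"
    using b q by (simp only: power_powr_eq)
  finally show ?thesis by (simp add: mult.commute)
qed

theorem mainTheorem11:
  fixes Om :: "'a set" and mu :: "'a \<Rightarrow> real" and n :: nat
    and rho q :: real and f :: "(nat \<Rightarrow> 'a) \<Rightarrow> real"
  assumes "fin_prob_space Om mu"
    and "0 < rho" and "rho \<le> 1/3" and "q \<ge> 2"
  shows "normq_pow Om mu {0..<n} q (noiseT Om mu n (rho / sqrt q) f)
    \<le> (\<Sum>S\<in>Pow {0..<n}.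
          (rho * (1 + 2 * (q - 2) / ln (1 / rho))) powr (q * card S)
          * q powr (- (q * card S) / 2)
          * expS Om mu S (\<lambda>x. norm2 Om mu ({0..<n} - S) (derivD Om mu S x f) powr q))"
proof -
  define beta where "beta = rho * (1 + 2 * (q - 2) / ln (1 / rho))"
  have "1 \<le> 1 + 2 * (q - 2) / ln (1 / rho)"
    by (rule noise_gain_ge_one[OF assms(4,2) _ order_refl]) (use assms(3) in linarith)
  hence "0 < beta" unfolding beta_def using assms(2) by (intro mult_pos_pos) linarith+
  hence coeff: "beta powr (q * k) * q powr (- (q * k) / 2) = ((beta / sqrt q) powr q) ^ k" for k :: nat
    using assms(4) by (intro powr_mult_nat_eq_power) auto
  show ?thesis
    unfolding normq_pow_def noiseT_eq_noise beta_def[symmetric] coeff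
    using noise_moment_le[OF assms(1,4,2,3) order_refl finite_atLeastLessThan, folded beta_def] .
qed

end
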